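(* For every integer $d\ge 2$ there is a polynomial $p_d$ of degree exactly $d-2$ such that $v_n^d=p_d(n)$ for all integers $n\ge \lceil d/2\rceil+1$.
   Context: The $2\times n$ Miura-ori $M_{2,n}$ ($n\ge1$) has faces $\alpha_{i,j}$ ($i\in\{1,2\}$, $j\in\{1,\dots,n\}$), interior vertices $x_1,\dots,x_{n-1}$, and creases $e_0$ and $e_{3k-1},e_{3k},e_{3k+1}$ ($k=1,\dots,n-1$). At $x_k$ the creases are left $e_{3k-3}$, top $e_{3k-1}$, right $e_{3k}$, bottom $e_{3k+1}$. Face $\alpha_{1,j}$ is bordered by those of $e_{3j-4}$ (iff $j\ge2$), $e_{3j-3}$, $e_{3j-1}$ (iff $j\le n-1$); $\alpha_{2,j}$ by those of $e_{3j-2}$ (iff $j\ge2$), $e_{3j-3}$, $e_{3j+1}$ (iff $j\le n-1$). An MV assignment $\mu$ maps creases to $\{1,-1\}$; it is locally valid if for each $k$ exactly one of $\mu(e_{3k-1}),\mu(e_{3k}),\mu(e_{3k+1})$ differs from $\mu(e_{3k-3})$. The face flip $\mu_\alpha$ negates $\mu$ on the creases bordering $\alpha$; $\alpha$ is flippable under $\mu$ if $\mu,\mu_\alpha$ are both locally valid. $v_n^d$ denotes the number of locally valid MV assignments of $M_{2,n}$ with exactly $d$ flippable faces, i.e., the number of vertices of degree $d$ in the origami flip graph ${\rm OFG}(M_{2,n})$. *)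

theory Defs
  imports "HOL-Library.FuncSet" "HOL-Computational_Algebra.Polynomial"
begin

text \<open>The 2 x n Miura-ori M_{2,n}. Crease e_m is represented by its index m :: nat.
  Mountain/valley values are the integers 1 and -1.\<close>

definition creases :: "nat \<Rightarrow> nat set" where
  "creases n = {0} \<union> (\<Union>k\<in>{1..n-1}. {3*k-1, 3*k, 3*k+1})"

definition faces :: "nat \<Rightarrow> (nat \<times> nat) set" where
  "faces n = {1,2} \<times> {1..n}"

definition border :: "nat \<Rightarrow> nat \<times> nat \<Rightarrow> nat set" where
  "border n f = (case f of (i, j) \<Rightarrow>
     (if i = 1 then
        (if j \<ge> 2 then {3*j-4} else {}) \<union> {3*j-3} \<union> (if j \<le> n-1 then {3*j-1} else {})
      else
        (if j \<ge> 2 then {3*j-2} else {}) \<union> {3*j-3} \<union> (if j \<le> n-1 then {3*j+1} else {})))"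

definition mv_assignments :: "nat \<Rightarrow> (nat \<Rightarrow> int) set" where
  "mv_assignments n = creases n \<rightarrow>\<^sub>E {1, -1}"

definition locally_valid :: "nat \<Rightarrow> (nat \<Rightarrow> int) \<Rightarrow> bool" where
  "locally_valid n \<mu> \<longleftrightarrow> \<mu> \<in> mv_assignments n \<and>
     (\<forall>k\<in>{1..n-1}. card {c \<in> {3*k-1, 3*k, 3*k+1}. \<mu> c \<noteq> \<mu> (3*k-3)} = 1)"

definition face_flip :: "nat \<Rightarrow> (nat \<Rightarrow> int) \<Rightarrow> nat \<times> nat \<Rightarrow> (nat \<Rightarrow> int)" where
  "face_flip n \<mu> f = (\<lambda>c. if c \<in> border n f then - \<mu> c else \<mu> c)"

definition flippable :: "nat \<Rightarrow> (nat \<Rightarrow> int) \<Rightarrow> nat \<times> nat \<Rightarrow> bool" where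
  "flippable n \<mu> f \<longleftrightarrow> locally_valid n \<mu> \<and> locally_valid n (face_flip n \<mu> f)"

definition v :: "nat \<Rightarrow> nat \<Rightarrow> nat" where
  "v n d = card {\<mu>. locally_valid n \<mu> \<and> card {f \<in> faces n. flippable n \<mu> f} = d}"

end

theory Submission
  imports Defs
begin

text \<open>A locally valid assignment is determined by its value on e_0 together with the word of
  vertex types, the type of x_k recording which of its top, right and bottom creases disagrees with
  the left one, and every pair of a sign and a word over {0, 1, 2} occurs. Flipping alpha_{1,j}
  preserves validity iff x_{j-1} is not of bottom type and x_j is not of top type (symmetrically
  for alpha_{2,j}), so the degree is a sum of local weights along the word. Counting words by
  their first letter gives v_n^d = 2 R(n-1, d), where A(m, d) and R(m, d) satisfy
  A(m+1, d) - A(m, d) = R(m, d-1) + A(m, d-1) and R(m+1, d) = 2 A(m, d-1) + R(m, d-2). Induction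
  on d with discrete antiderivatives then shows that A(m, d) and R(m, d) are eventually polynomials
  in m of degrees d-1 and d-2 with positive leading coefficients.\<close>

text \<open>Recording the coefficient of x^k rather than the exact degree lets terms of lower order
  (with c = 0) be added without affecting the leading coefficient.\<close>
definition eventually_poly :: "nat \<Rightarrow> nat \<Rightarrow> 'a::comm_semiring_1 \<Rightarrow> (nat \<Rightarrow> 'a) \<Rightarrow> bool" where
  "eventually_poly N k c f \<longleftrightarrow>
     (\<exists>p. degree p \<le> k \<and> coeff p k = c \<and> (\<forall>m\<ge>N. f m = poly p (of_nat m)))"

lemma eventually_poly_mono:
  "eventually_poly N k c f \<Longrightarrow> N \<le> N' \<Longrightarrow> eventually_poly N' k c f"
  unfolding eventually_poly_def by auto

lemma eventually_poly_cong:
  "eventually_poly N k c f \<Longrightarrow> (\<And>m. N \<le> m \<Longrightarrow> f m = g m) \<Longrightarrow> eventually_poly N k c g"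
  unfolding eventually_poly_def by auto

lemma eventually_poly_const: "eventually_poly N 0 c (\<lambda>_. c)"
  unfolding eventually_poly_def by (intro exI[of _ "[:c:]"]) simp

lemma eventually_poly_zero: "eventually_poly N k 0 (\<lambda>_. 0)"
  unfolding eventually_poly_def by (intro exI[of _ 0]) simp

lemma eventually_poly_raise:
  "eventually_poly N k c f \<Longrightarrow> k < k' \<Longrightarrow> eventually_poly N k' 0 f"
  unfolding eventually_poly_def by (metis coeff_eq_0 order.strict_trans1 less_imp_le order.trans)

lemma eventually_poly_add:
  "eventually_poly N k a f \<Longrightarrow> eventually_poly N k b g \<Longrightarrow>
   eventually_poly N k (a + b) (\<lambda>m. f m + g m)"
  unfolding eventually_poly_def by (metis coeff_add degree_add_le poly_add)

lemma eventually_poly_scale: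
  "eventually_poly N k c f \<Longrightarrow> eventually_poly N k (a * c) (\<lambda>m. a * f m)"
  unfolding eventually_poly_def by (metis coeff_smult degree_smult_le order.trans poly_smult)

lemma coeff_pcompose_shift:
  fixes p :: "'a::idom poly"
  assumes "degree p \<le> k"
  shows "coeff (pcompose p [:a, 1:]) k = coeff p k"
proof (cases "degree p = k")
  case True
  then show ?thesis
    using lead_coeff_comp[of "[:a, 1:]" p] degree_pcompose[of p "[:a, 1:]"] by simp
next
  case False
  then show ?thesis
    using assms degree_pcompose[of p "[:a, 1:]"] by (simp add: coeff_eq_0)
qed

lemma eventually_poly_shift:
  fixes f :: "nat \<Rightarrow> 'a::idom"
  assumes "eventually_poly N k c f"
  shows "eventually_poly (Suc N) k c (\<lambda>m. f (m - 1))"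
proof -
  obtain p where p: "degree p \<le> k" "coeff p k = c" "\<forall>m\<ge>N. f m = poly p (of_nat m)"
    using assms unfolding eventually_poly_def by blast
  have "f (m - 1) = poly (pcompose p [:-1, 1:]) (of_nat m)" if "Suc N \<le> m" for m
    using p(3) that by (simp add: poly_pcompose of_nat_diff)
  moreover have "degree (pcompose p [:-1, 1:]) \<le> k"
    using p(1) by (simp add: degree_pcompose)
  ultimately show ?thesis
    unfolding eventually_poly_def using coeff_pcompose_shift[OF p(1)] p(2) by blast
qed

lemma monom_forward_difference:
  fixes a :: "'a::comm_ring_1"
  obtains D where "degree D \<le> k" "coeff D k = of_nat (Suc k) * a"
    "\<And>x. poly D x = poly (monom a (Suc k)) (x + 1) - poly (monom a (Suc k)) x"
proof
  define D where "D = smult a ([:1, 1:] ^ Suc k - monom 1 (Suc k))"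
  show "poly D x = poly (monom a (Suc k)) (x + 1) - poly (monom a (Suc k)) x" for x
    by (simp add: D_def poly_monom algebra_simps)
  show "coeff D k = of_nat (Suc k) * a"
    using coeff_linear_poly_power[of k "Suc k" "1::'a" 1] by (simp add: D_def del: power_Suc)
  show "degree D \<le> k"
  proof (rule degree_le, intro allI impI)
    fix i assume "k < i"
    then consider "i = Suc k" | "Suc k < i" by linarith
    then show "coeff D i = 0"
      by cases (simp_all add: D_def coeff_linear_power coeff_eq_0 degree_linear_power)
  qed
qed

lemma poly_antidifference:
  fixes p :: "'a::field_char_0 poly"
  assumes "degree p \<le> k"
  shows "\<exists>q. degree q \<le> Suc k \<and> coeff q (Suc k) = coeff p k / of_nat (Suc k) \<and>
           (\<forall>x. poly q (x + 1) - poly q x = poly p x)"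
  using assms
proof (induction k arbitrary: p)
  case 0
  define h where "h = monom (coeff p 0) (Suc 0)"
  obtain c where "p = [:c:]"
    using "0.prems" by (metis degree_0_id le_zero_eq)
  then have "poly h (x + 1) - poly h x = poly p x" for x
    by (simp add: h_def poly_monom algebra_simps)
  then show ?case
    by (intro exI[of _ h]) (simp add: h_def degree_monom_le)
next
  case (Suc k)
  define h where "h = monom (coeff p (Suc k) / of_nat (Suc (Suc k))) (Suc (Suc k))"
  obtain D where D: "degree D \<le> Suc k"
    "coeff D (Suc k) = of_nat (Suc (Suc k)) * (coeff p (Suc k) / of_nat (Suc (Suc k)))"
    "\<And>x. poly D x = poly h (x + 1) - poly h x"
    using monom_forward_difference unfolding h_def by blast
  have "degree (p - D) \<le> Suc k"
    using Suc.prems D(1) degree_diff_le by blast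
  moreover have "coeff (p - D) (Suc k) = 0"
    using D(2) by (simp del: of_nat_Suc)
  ultimately have "degree (p - D) \<le> k"
    by (metis degree_0 le_SucE leading_coeff_0_iff zero_le)
  then obtain q where q: "degree q \<le> Suc k" "\<forall>x. poly q (x + 1) - poly q x = poly (p - D) x"
    using Suc.IH by blast
  have "degree (h + q) \<le> Suc (Suc k)"
    using q(1) by (intro degree_add_le) (simp_all add: h_def degree_monom_le)
  moreover have "coeff (h + q) (Suc (Suc k)) = coeff p (Suc k) / of_nat (Suc (Suc k))"
    using q(1) by (simp add: h_def coeff_eq_0)
  moreover have "poly (h + q) (x + 1) - poly (h + q) x = poly p x" for x
  proof -
    have "poly (h + q) (x + 1) - poly (h + q) x
        = (poly h (x + 1) - poly h x) + (poly q (x + 1) - poly q x)"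
      by simp
    also have "\<dots> = poly D x + poly (p - D) x"
      using q(2) D(3) by simp
    finally show ?thesis by simp
  qed
  ultimately show ?case by blast
qed

lemma eventually_poly_antidifference:
  fixes f :: "nat \<Rightarrow> 'a::field_char_0"
  assumes "eventually_poly N k c (\<lambda>m. f (Suc m) - f m)"
  shows "eventually_poly N (Suc k) (c / of_nat (Suc k)) f"
proof -
  obtain p where p: "degree p \<le> k" "coeff p k = c"
    "\<forall>m\<ge>N. f (Suc m) - f m = poly p (of_nat m)"
    using assms unfolding eventually_poly_def by blast
  obtain q where q: "degree q \<le> Suc k" "coeff q (Suc k) = c / of_nat (Suc k)"
    "\<forall>x. poly q (x + 1) - poly q x = poly p x"
    using poly_antidifference[OF p(1)] p(2) by blast
  define g where "g m = f m - poly q (of_nat m)" for m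
  have g_const: "g m = g N" if "N \<le> m" for m
    using that
  proof (induction m rule: dec_induct)
    case (step m)
    have "g (Suc m) - g m = (f (Suc m) - f m) - (poly q (of_nat m + 1) - poly q (of_nat m))"
      by (simp add: g_def algebra_simps)
    also have "\<dots> = 0"
      using p(3) q(3) step(1) by simp
    finally show ?case
      using step(3) by simp
  qed simp
  have "f m = poly (q + [:g N:]) (of_nat m)" if "N \<le> m" for m
  proof -
    have "f m = poly q (of_nat m) + g m"
      by (simp add: g_def)
    then show ?thesis
      using g_const[OF that] by simp
  qed
  moreover have "degree (q + [:g N:]) \<le> Suc k"
    using q(1) by (simp add: degree_add_le)
  ultimately show ?thesis
    unfolding eventually_poly_def using q(2) by (intro exI[of _ "q + [:g N:]"]) simp
qed

lemma mem_creases_iff: "c \<in> creases n \<longleftrightarrow> c = 0 \<or> 2 \<le> c \<and> c + 2 \<le> 3 * n"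
proof
  assume "c \<in> creases n"
  then show "c = 0 \<or> 2 \<le> c \<and> c + 2 \<le> 3 * n"
    unfolding creases_def by auto
next
  assume c: "c = 0 \<or> 2 \<le> c \<and> c + 2 \<le> 3 * n"
  show "c \<in> creases n"
  proof (cases "c = 0")
    case False
    define k where "k = (c + 1) div 3"
    have "k \<in> {1..n-1}" "c \<in> {3*k-1, 3*k, 3*k+1}"
      using c False unfolding k_def by auto
    then show ?thesis
      unfolding creases_def by blast
  qed (simp add: creases_def)
qed

lemma vertex_creases:
  assumes "k \<in> {1..n-1}"
  shows "3*k-3 \<in> creases n" "3*k-1 \<in> creases n" "3*k \<in> creases n" "3*k+1 \<in> creases n"
  using assms unfolding mem_creases_iff by auto

lemma mv_assignment_sign: "\<mu> \<in> mv_assignments n \<Longrightarrow> c \<in> creases n \<Longrightarrow> \<mu> c \<in> {1, -1}"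
  unfolding mv_assignments_def by auto

definition vertex_valid :: "(nat \<Rightarrow> int) \<Rightarrow> nat \<Rightarrow> bool" where
  "vertex_valid \<mu> k \<longleftrightarrow> card {c \<in> {3*k-1, 3*k, 3*k+1}. \<mu> c \<noteq> \<mu> (3*k-3)} = 1"

lemma locally_valid_iff:
  "locally_valid n \<mu> \<longleftrightarrow> \<mu> \<in> mv_assignments n \<and> (\<forall>k\<in>{1..n-1}. vertex_valid \<mu> k)"
  unfolding locally_valid_def vertex_valid_def ..

lemma locally_valid_sign: "locally_valid n \<mu> \<Longrightarrow> c \<in> creases n \<Longrightarrow> \<mu> c \<in> {1, -1}"
  unfolding locally_valid_iff using mv_assignment_sign by blast

text \<open>Types 0, 1, 2 stand for the top, right and bottom crease of x_k; at a valid vertex the type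
  names the crease whose value differs from that of the left crease.\<close>
definition vertex_type :: "(nat \<Rightarrow> int) \<Rightarrow> nat \<Rightarrow> nat" where
  "vertex_type \<mu> k =
     (if \<mu> (3*k-1) \<noteq> \<mu> (3*k-3) then 0 else if \<mu> (3*k) \<noteq> \<mu> (3*k-3) then 1 else 2)"

lemma vertex_type_cases: "vertex_type \<mu> k \<in> {0, 1, 2}"
  unfolding vertex_type_def by auto

lemma card_filter_three_eq_1:
  assumes "a \<noteq> b" "a \<noteq> c" "b \<noteq> c"
  shows "card {x \<in> {a, b, c}. P x} = 1 \<longleftrightarrow>
    P a \<and> \<not> P b \<and> \<not> P c \<or> \<not> P a \<and> P b \<and> \<not> P c \<or> \<not> P a \<and> \<not> P b \<and> P c"
proof -
  have split: "{x \<in> {a, b, c}. P x} =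
      (if P a then {a} else {}) \<union> (if P b then {b} else {}) \<union> (if P c then {c} else {})"
    by auto
  show ?thesis
    unfolding split using assms
    by (cases "P a"; cases "P b"; cases "P c") (auto simp: card_insert_if)
qed

lemma vertex_valid_iff:
  assumes "1 \<le> k"
  shows "vertex_valid \<mu> k \<longleftrightarrow>
    \<mu> (3*k-1) \<noteq> \<mu> (3*k-3) \<and> \<mu> (3*k) = \<mu> (3*k-3) \<and> \<mu> (3*k+1) = \<mu> (3*k-3) \<or>
    \<mu> (3*k-1) = \<mu> (3*k-3) \<and> \<mu> (3*k) \<noteq> \<mu> (3*k-3) \<and> \<mu> (3*k+1) = \<mu> (3*k-3) \<or>
    \<mu> (3*k-1) = \<mu> (3*k-3) \<and> \<mu> (3*k) = \<mu> (3*k-3) \<and> \<mu> (3*k+1) \<noteq> \<mu> (3*k-3)"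
proof -
  have "3*k-1 \<noteq> 3*k" "3*k-1 \<noteq> 3*k+1" "3*k \<noteq> 3*k+1"
    using assms by auto
  from card_filter_three_eq_1[OF this, of "\<lambda>c. \<mu> c \<noteq> \<mu> (3*k-3)"] show ?thesis
    unfolding vertex_valid_def by simp
qed

lemma locally_valid_vertex_values:
  assumes lv: "locally_valid n \<mu>" and k: "k \<in> {1..n-1}"
  shows "\<mu> (3*k-1) = (if vertex_type \<mu> k = 0 then - \<mu> (3*k-3) else \<mu> (3*k-3))"
    "\<mu> (3*k) = (if vertex_type \<mu> k = 1 then - \<mu> (3*k-3) else \<mu> (3*k-3))"
    "\<mu> (3*k+1) = (if vertex_type \<mu> k = 2 then - \<mu> (3*k-3) else \<mu> (3*k-3))"
proof -
  define L T R B where "L = \<mu> (3*k-3)" and "T = \<mu> (3*k-1)" and "R = \<mu> (3*k)"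
    and "B = \<mu> (3*k+1)"
  have signs: "L \<in> {1, -1}" "T \<in> {1, -1}" "R \<in> {1, -1}" "B \<in> {1, -1}"
    unfolding L_def T_def R_def B_def using locally_valid_sign[OF lv] vertex_creases[OF k] by auto
  have "1 \<le> k"
    using k by simp
  have "vertex_valid \<mu> k"
    using lv k unfolding locally_valid_iff by blast
  then have "T \<noteq> L \<and> R = L \<and> B = L \<or> T = L \<and> R \<noteq> L \<and> B = L \<or> T = L \<and> R = L \<and> B \<noteq> L"
    unfolding vertex_valid_iff[OF \<open>1 \<le> k\<close>] L_def T_def R_def B_def .
  then show "T = (if vertex_type \<mu> k = 0 then - L else L)"
    "R = (if vertex_type \<mu> k = 1 then - L else L)" "B = (if vertex_type \<mu> k = 2 then - L else L)"
    using signs unfolding vertex_type_def L_def[symmetric] T_def[symmetric] R_def[symmetric]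
      B_def[symmetric] by auto
qed

lemma border_row1_vertex:
  assumes "j \<in> {1..n}" "k \<in> {1..n-1}"
  shows "3*k-3 \<in> border n (1, j) \<longleftrightarrow> k = j" "3*k-1 \<in> border n (1, j) \<longleftrightarrow> k + 1 = j \<or> k = j"
    "3*k \<in> border n (1, j) \<longleftrightarrow> k + 1 = j" "3*k+1 \<notin> border n (1, j)"
  using assms unfolding border_def by auto presburger+

lemma border_row2_vertex:
  assumes "j \<in> {1..n}" "k \<in> {1..n-1}"
  shows "3*k-3 \<in> border n (2, j) \<longleftrightarrow> k = j" "3*k-1 \<notin> border n (2, j)"
    "3*k \<in> border n (2, j) \<longleftrightarrow> k + 1 = j" "3*k+1 \<in> border n (2, j) \<longleftrightarrow> k + 1 = j \<or> k = j"
  using assms unfolding border_def by auto presburger+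

lemma face_flip_mv_assignment:
  assumes "\<mu> \<in> mv_assignments n" "f \<in> faces n"
  shows "face_flip n \<mu> f \<in> mv_assignments n"
proof -
  have "border n f \<subseteq> creases n"
    using assms(2) unfolding faces_def border_def by (auto simp: mem_creases_iff split: if_splits)
  then show ?thesis
    using assms(1) unfolding mv_assignments_def face_flip_def PiE_iff extensional_def by auto
qed

lemma flippable_iff_vertex_valid:
  assumes "f \<in> faces n"
  shows "flippable n \<mu> f \<longleftrightarrow>
    locally_valid n \<mu> \<and> (\<forall>k\<in>{1..n-1}. vertex_valid (face_flip n \<mu> f) k)"
  using face_flip_mv_assignment[OF _ assms] unfolding flippable_def locally_valid_iff by blast

lemma vertex_valid_flip_row1:
  assumes lv: "locally_valid n \<mu>" and j: "j \<in> {1..n}" and k: "k \<in> {1..n-1}"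
  shows "vertex_valid (face_flip n \<mu> (1, j)) k \<longleftrightarrow>
    (k + 1 = j \<longrightarrow> vertex_type \<mu> k \<noteq> 2) \<and> (k = j \<longrightarrow> vertex_type \<mu> k \<noteq> 0)"
proof -
  define L t where "L = \<mu> (3*k-3)" and "t = vertex_type \<mu> k"
  have L: "L \<in> {1, -1}"
    unfolding L_def using locally_valid_sign[OF lv vertex_creases(1)[OF k]] .
  have t: "t \<in> {0, 1, 2}"
    unfolding t_def by (rule vertex_type_cases)
  note \<mu> = locally_valid_vertex_values[OF lv k, folded L_def t_def]
  note border = border_row1_vertex[OF j k]
  have k1: "1 \<le> k"
    using k by simp
  have \<nu>: "face_flip n \<mu> (1, j) (3*k-3) = (if k = j then - L else L)"
    "face_flip n \<mu> (1, j) (3*k-1) =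
       (if (k + 1 = j \<or> k = j) \<noteq> (t = 0) then - L else L)"
    "face_flip n \<mu> (1, j) (3*k) = (if (k + 1 = j) \<noteq> (t = 1) then - L else L)"
    "face_flip n \<mu> (1, j) (3*k+1) = (if t = 2 then - L else L)"
    using border \<mu> unfolding face_flip_def L_def by auto
  have "vertex_valid (face_flip n \<mu> (1, j)) k \<longleftrightarrow>
    (k + 1 = j \<longrightarrow> t \<noteq> 2) \<and> (k = j \<longrightarrow> t \<noteq> 0)"
    using L t unfolding vertex_valid_iff[OF k1] \<nu> by auto
  then show ?thesis
    unfolding t_def .
qed

lemma vertex_valid_flip_row2:
  assumes lv: "locally_valid n \<mu>" and j: "j \<in> {1..n}" and k: "k \<in> {1..n-1}"
  shows "vertex_valid (face_flip n \<mu> (2, j)) k \<longleftrightarrow>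
    (k + 1 = j \<longrightarrow> vertex_type \<mu> k \<noteq> 0) \<and> (k = j \<longrightarrow> vertex_type \<mu> k \<noteq> 2)"
proof -
  define L t where "L = \<mu> (3*k-3)" and "t = vertex_type \<mu> k"
  have L: "L \<in> {1, -1}"
    unfolding L_def using locally_valid_sign[OF lv vertex_creases(1)[OF k]] .
  have t: "t \<in> {0, 1, 2}"
    unfolding t_def by (rule vertex_type_cases)
  note \<mu> = locally_valid_vertex_values[OF lv k, folded L_def t_def]
  note border = border_row2_vertex[OF j k]
  have k1: "1 \<le> k"
    using k by simp
  have \<nu>: "face_flip n \<mu> (2, j) (3*k-3) = (if k = j then - L else L)"
    "face_flip n \<mu> (2, j) (3*k-1) = (if t = 0 then - L else L)"
    "face_flip n \<mu> (2, j) (3*k) = (if (k + 1 = j) \<noteq> (t = 1) then - L else L)"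
    "face_flip n \<mu> (2, j) (3*k+1) =
       (if (k + 1 = j \<or> k = j) \<noteq> (t = 2) then - L else L)"
    using border \<mu> unfolding face_flip_def L_def by auto
  have "vertex_valid (face_flip n \<mu> (2, j)) k \<longleftrightarrow>
    (k + 1 = j \<longrightarrow> t \<noteq> 0) \<and> (k = j \<longrightarrow> t \<noteq> 2)"
    using L t unfolding vertex_valid_iff[OF k1] \<nu> by auto
  then show ?thesis
    unfolding t_def .
qed

definition padded_type :: "nat \<Rightarrow> (nat \<Rightarrow> int) \<Rightarrow> nat \<Rightarrow> nat" where
  "padded_type n \<mu> k = (if k \<in> {1..n-1} then vertex_type \<mu> k else 3)"

lemma flippable_row1:
  assumes lv: "locally_valid n \<mu>" and j: "j \<in> {1..n}"
  shows "flippable n \<mu> (1, j) \<longleftrightarrow> padded_type n \<mu> (j - 1) \<noteq> 2 \<and> padded_type n \<mu> j \<noteq> 0"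
proof -
  have "(1, j) \<in> faces n"
    using j by (simp add: faces_def)
  then have "flippable n \<mu> (1, j) \<longleftrightarrow>
      (\<forall>k\<in>{1..n-1}. (k + 1 = j \<longrightarrow> vertex_type \<mu> k \<noteq> 2) \<and> (k = j \<longrightarrow> vertex_type \<mu> k \<noteq> 0))"
    using lv vertex_valid_flip_row1[OF lv j] flippable_iff_vertex_valid by simp
  also have "\<dots> \<longleftrightarrow> padded_type n \<mu> (j - 1) \<noteq> 2 \<and> padded_type n \<mu> j \<noteq> 0"
    using j unfolding padded_type_def by auto
  finally show ?thesis .
qed

lemma flippable_row2:
  assumes lv: "locally_valid n \<mu>" and j: "j \<in> {1..n}"
  shows "flippable n \<mu> (2, j) \<longleftrightarrow> padded_type n \<mu> (j - 1) \<noteq> 0 \<and> padded_type n \<mu> j \<noteq> 2"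
proof -
  have "(2, j) \<in> faces n"
    using j by (simp add: faces_def)
  then have "flippable n \<mu> (2, j) \<longleftrightarrow>
      (\<forall>k\<in>{1..n-1}. (k + 1 = j \<longrightarrow> vertex_type \<mu> k \<noteq> 0) \<and> (k = j \<longrightarrow> vertex_type \<mu> k \<noteq> 2))"
    using lv vertex_valid_flip_row2[OF lv j] flippable_iff_vertex_valid by simp
  also have "\<dots> \<longleftrightarrow> padded_type n \<mu> (j - 1) \<noteq> 0 \<and> padded_type n \<mu> j \<noteq> 2"
    using j unfolding padded_type_def by auto
  finally show ?thesis .
qed

definition column_flips :: "nat \<Rightarrow> nat \<Rightarrow> nat" where
  "column_flips a b = of_bool (a \<noteq> 2 \<and> b \<noteq> 0) + of_bool (a \<noteq> 0 \<and> b \<noteq> 2)"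

lemma card_flippable_faces:
  assumes lv: "locally_valid n \<mu>"
  shows "card {f \<in> faces n. flippable n \<mu> f} =
    (\<Sum>j<n. column_flips (padded_type n \<mu> j) (padded_type n \<mu> (Suc j)))"
proof -
  have "card {f \<in> faces n. flippable n \<mu> f} = (\<Sum>f\<in>{1,2} \<times> {1..n}. of_bool (flippable n \<mu> f))"
    by (simp add: faces_def Int_def)
  also have "\<dots> = (\<Sum>j\<in>{1..n}. of_bool (flippable n \<mu> (1, j)) + of_bool (flippable n \<mu> (2, j)))"
    by (simp add: sum.cartesian_product' sum.distrib del: sum_of_bool_eq)
  also have "\<dots> = (\<Sum>j\<in>{1..n}. column_flips (padded_type n \<mu> (j - 1)) (padded_type n \<mu> j))"
    using flippable_row1[OF lv] flippable_row2[OF lv] by (simp add: column_flips_def)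
  also have "\<dots> = (\<Sum>j<n. column_flips (padded_type n \<mu> j) (padded_type n \<mu> (Suc j)))"
    by (simp add: sum.atLeast1_atMost_eq)
  finally show ?thesis .
qed

fun word_flips :: "nat list \<Rightarrow> nat" where
  "word_flips (a # b # w) = column_flips a b + word_flips (b # w)"
| "word_flips _ = 0"

lemma word_flips_eq_sum: "word_flips w = (\<Sum>j<length w - 1. column_flips (w ! j) (w ! Suc j))"
  by (induction w rule: word_flips.induct)
    (simp_all add: sum.lessThan_Suc_shift del: sum.lessThan_Suc)

definition type_word :: "nat \<Rightarrow> (nat \<Rightarrow> int) \<Rightarrow> nat list" where
  "type_word n \<mu> = map (vertex_type \<mu>) [1..<n]"

lemma nth_type_word: "k \<in> {1..n-1} \<Longrightarrow> type_word n \<mu> ! (k - 1) = vertex_type \<mu> k"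
  by (auto simp: type_word_def)

lemma nth_padded_type_word:
  assumes "j \<le> n"
  shows "(3 # type_word n \<mu> @ [3]) ! j = padded_type n \<mu> j"
  using assms by (cases j) (auto simp: padded_type_def type_word_def nth_append)

lemma card_flippable_eq_word_flips:
  assumes "locally_valid n \<mu>" "1 \<le> n"
  shows "card {f \<in> faces n. flippable n \<mu> f} = word_flips (3 # type_word n \<mu> @ [3])"
proof -
  let ?w = "3 # type_word n \<mu> @ [3]"
  have "length ?w - 1 = n"
    using assms(2) by (simp add: type_word_def)
  then have "word_flips ?w = (\<Sum>j<n. column_flips (?w ! j) (?w ! Suc j))"
    by (simp only: word_flips_eq_sum)
  also have "\<dots> = (\<Sum>j<n. column_flips (padded_type n \<mu> j) (padded_type n \<mu> (Suc j)))"
    by (intro sum.cong refl) (simp only: lessThan_iff nth_padded_type_word less_imp_le Suc_leI)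
  finally show ?thesis
    using card_flippable_faces[OF assms(1)] by simp
qed

text \<open>Inverse of the encoding by sign and type word: spine s w i is the value of e_{3i}, and the
  crease 3k-1+t of x_k (t = 0, 1, 2 for top, right, bottom) is opposite to e_{3k-3} iff x_k has
  type t.\<close>
fun spine :: "int \<Rightarrow> nat list \<Rightarrow> nat \<Rightarrow> int" where
  "spine s w 0 = s"
| "spine s w (Suc i) = (if w ! i = 1 then - spine s w i else spine s w i)"

lemma spine_sign: "s \<in> {1, -1} \<Longrightarrow> spine s w i \<in> {1, -1}"
  by (induction i) auto

definition assignment_of :: "nat \<Rightarrow> int \<Rightarrow> nat list \<Rightarrow> nat \<Rightarrow> int" where
  "assignment_of n s w c =
     (if c \<notin> creases n then undefined
      else if c mod 3 = 0 then spine s w (c div 3)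
      else let k = (c + 1) div 3 in
        if w ! (k - 1) = (c + 1) mod 3 then - spine s w (k - 1) else spine s w (k - 1))"

lemma assignment_of_vertex:
  assumes k: "k \<in> {1..n-1}"
  shows "assignment_of n s w (3*k-3) = spine s w (k - 1)"
    "assignment_of n s w (3*k-1) =
      (if w ! (k - 1) = 0 then - spine s w (k - 1) else spine s w (k - 1))"
    "assignment_of n s w (3*k) =
      (if w ! (k - 1) = 1 then - spine s w (k - 1) else spine s w (k - 1))"
    "assignment_of n s w (3*k+1) =
      (if w ! (k - 1) = 2 then - spine s w (k - 1) else spine s w (k - 1))"
proof -
  have "1 \<le> k"
    using k by simp
  then have arith: "(3*k-3) mod 3 = 0" "(3*k-3) div 3 = k - 1"
    "(3*k-1) mod 3 \<noteq> 0" "(3*k-1+1) div 3 = k" "(3*k-1+1) mod 3 = 0"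
    "(3*k) mod 3 = 0" "(3*k) div 3 = k"
    "(3*k+1) mod 3 \<noteq> 0" "(3*k+1+1) div 3 = k" "(3*k+1+1) mod 3 = 2"
    by presburger+
  have "spine s w k = (if w ! (k - 1) = 1 then - spine s w (k - 1) else spine s w (k - 1))"
    using k spine.simps(2)[of s w "k - 1"] by simp
  then show "assignment_of n s w (3*k-3) = spine s w (k - 1)"
    "assignment_of n s w (3*k-1) =
      (if w ! (k - 1) = 0 then - spine s w (k - 1) else spine s w (k - 1))"
    "assignment_of n s w (3*k) =
      (if w ! (k - 1) = 1 then - spine s w (k - 1) else spine s w (k - 1))"
    "assignment_of n s w (3*k+1) =
      (if w ! (k - 1) = 2 then - spine s w (k - 1) else spine s w (k - 1))"
    using vertex_creases[OF k] unfolding assignment_of_def Let_def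
    by (simp_all only: arith simp_thms if_True if_False not_True_eq_False)
qed

lemma assignment_of_mv_assignment:
  assumes "s \<in> {1, -1}"
  shows "assignment_of n s w \<in> mv_assignments n"
proof -
  have "assignment_of n s w c \<in> {1, -1}" if "c \<in> creases n" for c
    using spine_sign[OF assms, of w "c div 3"] spine_sign[OF assms, of w "(c + 1) div 3 - 1"] that
    unfolding assignment_of_def Let_def by auto
  then show ?thesis
    unfolding mv_assignments_def PiE_iff extensional_def by (auto simp: assignment_of_def)
qed

lemma assignment_of_0: "assignment_of n s w 0 = s"
  by (simp add: assignment_of_def creases_def)

lemma assignment_of_valid:
  assumes s: "s \<in> {1, -1}" and w: "length w = n - 1" "set w \<subseteq> {0, 1, 2}"
  shows "locally_valid n (assignment_of n s w)" "type_word n (assignment_of n s w) = w"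
proof -
  have vertex:
    "vertex_valid (assignment_of n s w) k \<and> vertex_type (assignment_of n s w) k = w ! (k - 1)"
    if k: "k \<in> {1..n-1}" for k
  proof -
    define t where "t = w ! (k - 1)"
    have "k - 1 < length w"
      using k w(1) by auto
    then have "t \<in> {0, 1, 2}"
      using w(2) nth_mem unfolding t_def by blast
    moreover have "spine s w (k - 1) \<noteq> - spine s w (k - 1)"
      using spine_sign[OF s, of w "k - 1"] by auto
    moreover have "1 \<le> k"
      using k by simp
    ultimately show ?thesis
      unfolding vertex_valid_iff[OF \<open>1 \<le> k\<close>] vertex_type_def assignment_of_vertex[OF k]
        t_def[symmetric] by auto
  qed
  then show "locally_valid n (assignment_of n s w)"
    unfolding locally_valid_iff using assignment_of_mv_assignment[OF s] by blast
  show "type_word n (assignment_of n s w) = w"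
  proof (rule nth_equalityI)
    show "length (type_word n (assignment_of n s w)) = length w"
      using w by (simp add: type_word_def)
    fix i
    assume "i < length (type_word n (assignment_of n s w))"
    then have "Suc i \<in> {1..n-1}"
      by (simp add: type_word_def)
    from vertex[OF this] nth_type_word[OF this] show "type_word n (assignment_of n s w) ! i = w ! i"
      by simp
  qed
qed

lemma assignment_of_type_word:
  assumes lv: "locally_valid n \<mu>"
  shows "assignment_of n (\<mu> 0) (type_word n \<mu>) = \<mu>"
proof
  fix c
  have spine: "spine (\<mu> 0) (type_word n \<mu>) i = \<mu> (3 * i)" if "i \<le> n - 1" for i
    using that
  proof (induction i)
    case (Suc i)
    then have "Suc i \<in> {1..n-1}"
      by simp
    from locally_valid_vertex_values(2)[OF lv this] nth_type_word[OF this] show ?case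
      using Suc by simp
  qed simp
  show "assignment_of n (\<mu> 0) (type_word n \<mu>) c = \<mu> c"
  proof (cases "c \<in> creases n")
    case False
    then show ?thesis
      using lv unfolding locally_valid_iff mv_assignments_def assignment_of_def by auto
  next
    case True
    show ?thesis
    proof (cases "c = 0")
      case True
      then show ?thesis
        by (simp add: assignment_of_def creases_def)
    next
      case False
      then obtain k where k: "k \<in> {1..n-1}" and c: "c \<in> {3*k-1, 3*k, 3*k+1}"
        using \<open>c \<in> creases n\<close> unfolding creases_def by blast
      have "k - 1 \<le> n - 1"
        using k by auto
      from spine[OF this] have spine_left: "spine (\<mu> 0) (type_word n \<mu>) (k - 1) = \<mu> (3*k-3)"
        by (simp add: diff_mult_distrib2)
      note vertex_values =
        assignment_of_vertex[OF k] locally_valid_vertex_values[OF lv k] nth_type_word[OF k]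
      from c consider "c = 3*k-1" | "c = 3*k" | "c = 3*k+1"
        by blast
      then show ?thesis
        by cases (use vertex_values spine_left in simp_all)
    qed
  qed
qed

definition flip_words :: "nat \<Rightarrow> nat \<Rightarrow> nat \<Rightarrow> nat list set" where
  "flip_words m a d = {w. length w = m \<and> set w \<subseteq> {0, 1, 2} \<and> word_flips (a # w @ [3]) = d}"

lemma type_word_mem_flip_words:
  assumes lv: "locally_valid n \<mu>" and n: "1 \<le> n"
  shows "type_word n \<mu> \<in> flip_words (n - 1) 3 (card {f \<in> faces n. flippable n \<mu> f})"
proof -
  have "set (type_word n \<mu>) \<subseteq> {0, 1, 2}"
    unfolding type_word_def vertex_type_def by auto
  then show ?thesis
    unfolding flip_words_def using card_flippable_eq_word_flips[OF lv n] by (simp add: type_word_def)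
qed

lemma v_eq_card_flip_words:
  assumes n: "1 \<le> n"
  shows "v n d = 2 * card (flip_words (n - 1) 3 d)"
proof -
  define A where "A = {\<mu>. locally_valid n \<mu> \<and> card {f \<in> faces n. flippable n \<mu> f} = d}"
  define W where "W = {1, -1::int} \<times> flip_words (n - 1) 3 d"
  have "bij_betw (\<lambda>\<mu>. (\<mu> 0, type_word n \<mu>)) A W"
  proof (rule bij_betw_byWitness[where f' = "\<lambda>(s, w). assignment_of n s w"])
    show "\<forall>\<mu>\<in>A. (\<lambda>(s, w). assignment_of n s w) (\<mu> 0, type_word n \<mu>) = \<mu>"
      unfolding A_def using assignment_of_type_word by auto
    show "\<forall>x\<in>W. (\<lambda>\<mu>. (\<mu> 0, type_word n \<mu>)) ((\<lambda>(s, w). assignment_of n s w) x) = x"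
      unfolding W_def flip_words_def using assignment_of_valid(2) assignment_of_0 by auto
    have "\<mu> 0 \<in> {1, -1}" if "locally_valid n \<mu>" for \<mu>
      using locally_valid_sign[OF that] by (simp add: mem_creases_iff)
    then show "(\<lambda>\<mu>. (\<mu> 0, type_word n \<mu>)) ` A \<subseteq> W"
      unfolding A_def W_def using type_word_mem_flip_words[OF _ n] by auto
    show "(\<lambda>(s, w). assignment_of n s w) ` W \<subseteq> A"
      unfolding A_def W_def flip_words_def
      using assignment_of_valid card_flippable_eq_word_flips[OF _ n] by auto
  qed
  then have "card A = card W"
    by (rule bij_betw_same_card)
  then show ?thesis
    unfolding v_def A_def W_def by (simp add: card_cartesian_product)
qed

lemma finite_flip_words: "finite (flip_words m a d)"
proof (rule finite_subset)
  show "flip_words m a d \<subseteq> {w. set w \<subseteq> {0, 1, 2} \<and> length w = m}"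
    unfolding flip_words_def by auto
qed (simp add: finite_lists_length_eq)

lemma card_flip_words_Suc:
  "card (flip_words (Suc m) a d) =
    (\<Sum>b\<in>{0, 1, 2}. if column_flips a b \<le> d then card (flip_words m b (d - column_flips a b)) else 0)"
proof -
  define B where "B b = (if column_flips a b \<le> d then flip_words m b (d - column_flips a b) else {})"
    for b
  have "flip_words (Suc m) a d = (\<lambda>(b, w). b # w) ` (SIGMA b:{0, 1, 2}. B b)"
  proof (intro equalityI subsetI)
    fix w assume "w \<in> flip_words (Suc m) a d"
    then obtain b w' where "w = b # w'" "b \<in> {0, 1, 2}" "w' \<in> B b"
      unfolding flip_words_def B_def by (cases w) auto
    then show "w \<in> (\<lambda>(b, w). b # w) ` (SIGMA b:{0, 1, 2}. B b)"
      by force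
  qed (auto simp: flip_words_def B_def split: if_splits)
  moreover have "inj_on (\<lambda>(b, w). b # w) (SIGMA b:{0, 1, 2}. B b)"
    by (auto simp: inj_on_def)
  ultimately have "card (flip_words (Suc m) a d) = (\<Sum>b\<in>{0, 1, 2}. card (B b))"
    by (simp add: card_image card_SigmaI B_def finite_flip_words)
  then show ?thesis
    by (simp add: B_def if_distrib)
qed

text \<open>These are A and R: column_flips a b depends on a only through whether a \<in> {0, 2} or
  a \<in> {1, 3}, so two counting functions suffice.\<close>
fun count_side :: "nat \<Rightarrow> nat \<Rightarrow> nat" and count_middle :: "nat \<Rightarrow> nat \<Rightarrow> nat" where
  "count_side 0 d = of_bool (d = 1)"
| "count_side (Suc m) d =
    count_side m d + (if d = 0 then 0 else count_middle m (d - 1) + count_side m (d - 1))"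
| "count_middle 0 d = of_bool (d = 2)"
| "count_middle (Suc m) d =
    (if d = 0 then 0 else 2 * count_side m (d - 1)) + (if d < 2 then 0 else count_middle m (d - 2))"

lemma count_side_0: "count_side m 0 = 0"
  by (induction m) auto

lemma count_middle_less_2: "d < 2 \<Longrightarrow> count_middle m d = 0"
  by (induction m) (auto simp: count_side_0)

lemma count_side_1: "count_side m 1 = 1"
  by (induction m) (auto simp: count_side_0 count_middle_less_2)

lemma card_flip_words:
  "a \<in> {0, 1, 2, 3} \<Longrightarrow>
    card (flip_words m a d) = (if a \<in> {0, 2} then count_side m d else count_middle m d)"
proof (induction m arbitrary: a d)
  case 0
  have "flip_words 0 a d = (if column_flips a 3 = d then {[]} else {})"
    by (auto simp: flip_words_def)
  then show ?case
    using "0.prems" by (auto simp: column_flips_def)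
next
  case (Suc m)
  show ?case
    using Suc.prems unfolding card_flip_words_Suc
    by (cases d) (auto simp: Suc.IH column_flips_def)
qed

lemma v_eq_count_middle: "1 \<le> n \<Longrightarrow> v n d = 2 * count_middle (n - 1) d"
  using v_eq_card_flip_words card_flip_words[of 3] by simp

lemma count_side_poly_step:
  assumes d: "2 \<le> d"
    and side: "\<exists>a>0. eventually_poly ((d - 2) div 2) (d - 2) a (\<lambda>m. real (count_side m (d - 1)))"
    and middle: "eventually_poly ((d - 1) div 2) (d - 2) 0 (\<lambda>m. real (count_middle m (d - 1)))"
  shows "\<exists>c>0. eventually_poly ((d - 1) div 2) (d - 1) c (\<lambda>m. real (count_side m d))"
proof -
  obtain a where "a > 0"
    and "eventually_poly ((d - 2) div 2) (d - 2) a (\<lambda>m. real (count_side m (d - 1)))"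
    using side by blast
  then have "eventually_poly ((d - 1) div 2) (d - 2) a (\<lambda>m. real (count_side m (d - 1)))"
    by (auto elim: eventually_poly_mono intro: div_le_mono)
  from eventually_poly_add[OF middle this]
  have "eventually_poly ((d - 1) div 2) (d - 2) a
      (\<lambda>m. real (count_side (Suc m) d) - real (count_side m d))"
    using d by simp
  from eventually_poly_antidifference[OF this]
  have "eventually_poly ((d - 1) div 2) (d - 1) (a / real (d - 1)) (\<lambda>m. real (count_side m d))"
    using d by (simp add: Suc_diff_Suc numeral_2_eq_2)
  then show ?thesis
    using \<open>a > 0\<close> d by (intro exI[of _ "a / real (d - 1)"]) auto
qed

lemma count_middle_poly_step:
  assumes d: "2 \<le> d"
    and side: "\<exists>a>0. eventually_poly ((d - 2) div 2) (d - 2) a (\<lambda>m. real (count_side m (d - 1)))"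
    and middle: "eventually_poly ((d - 2) div 2) (d - 2) 0 (\<lambda>m. real (count_middle m (d - 2)))"
  shows "\<exists>c>0. eventually_poly (d div 2) (d - 2) c (\<lambda>m. real (count_middle m d))"
proof -
  obtain a where "a > 0"
    and "eventually_poly ((d - 2) div 2) (d - 2) a (\<lambda>m. real (count_side m (d - 1)))"
    using side by blast
  from eventually_poly_add[OF eventually_poly_scale[OF this(2), of 2] middle]
  have shifted: "eventually_poly (Suc ((d - 2) div 2)) (d - 2) (2 * a + 0)
      (\<lambda>m. 2 * real (count_side (m - 1) (d - 1)) + real (count_middle (m - 1) (d - 2)))"
    by (rule eventually_poly_shift)
  have N: "d div 2 = Suc ((d - 2) div 2)"
    using d by presburger
  have "eventually_poly (d div 2) (d - 2) (2 * a + 0) (\<lambda>m. real (count_middle m d))"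
    unfolding N using shifted
  proof (rule eventually_poly_cong)
    fix m assume "Suc ((d - 2) div 2) \<le> m"
    then obtain m' where "m = Suc m'"
      using Suc_le_D by blast
    then show "2 * real (count_side (m - 1) (d - 1)) + real (count_middle (m - 1) (d - 2)) =
        real (count_middle m d)"
      using d by simp
  qed
  then show ?thesis
    using \<open>a > 0\<close> by (intro exI[of _ "2 * a"]) simp
qed

lemma count_side_middle_poly:
  "(1 \<le> d \<longrightarrow> (\<exists>c>0. eventually_poly ((d - 1) div 2) (d - 1) c (\<lambda>m. real (count_side m d)))) \<and>
   (2 \<le> d \<longrightarrow> (\<exists>c>0. eventually_poly (d div 2) (d - 2) c (\<lambda>m. real (count_middle m d))))"
proof (induction d rule: less_induct)
  case (less d)
  have middle_lower: "eventually_poly (d' div 2) k 0 (\<lambda>m. real (count_middle m d'))"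
    if "d' < d" "d' < k + 2" for d' k
  proof (cases "d' < 2")
    case True
    then show ?thesis
      using eventually_poly_zero by (simp add: count_middle_less_2)
  next
    case False
    then obtain c where "eventually_poly (d' div 2) (d' - 2) c (\<lambda>m. real (count_middle m d'))"
      using less.IH[OF \<open>d' < d\<close>] by auto
    then show ?thesis
      using that False by (intro eventually_poly_raise) auto
  qed
  have side: "\<exists>a>0. eventually_poly ((d - 2) div 2) (d - 2) a (\<lambda>m. real (count_side m (d - 1)))"
    if "2 \<le> d"
    using less.IH[of "d - 1"] that by (simp add: numeral_2_eq_2)
  show ?case
  proof (intro conjI impI)
    assume "1 \<le> d"
    show "\<exists>c>0. eventually_poly ((d - 1) div 2) (d - 1) c (\<lambda>m. real (count_side m d))"
    proof (cases "d = 1")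
      case True
      have "(\<lambda>m. real (count_side m d)) = (\<lambda>_. 1)"
        unfolding True count_side_1 by simp
      then show ?thesis
        using True eventually_poly_const[of 0 "1::real"] by (intro exI[of _ 1]) simp
    next
      case False
      with \<open>1 \<le> d\<close> have "2 \<le> d"
        by simp
      with side middle_lower show ?thesis
        by (intro count_side_poly_step) simp_all
    qed
  next
    assume "2 \<le> d"
    with side middle_lower
    show "\<exists>c>0. eventually_poly (d div 2) (d - 2) c (\<lambda>m. real (count_middle m d))"
      by (intro count_middle_poly_step) simp_all
  qed
qed

theorem theorem4p11:
  fixes d :: nat
  assumes "d \<ge> 2"
  shows "\<exists>p :: real poly. p \<noteq> 0 \<and> degree p = d - 2 \<and>
           (\<forall>n::nat. int n \<ge> \<lceil>real d / 2\<rceil> + 1 \<longrightarrow> real (v n d) = poly p (real n))"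
proof -
  obtain c where "c > 0"
    and middle: "eventually_poly (d div 2) (d - 2) c (\<lambda>m. real (count_middle m d))"
    using count_side_middle_poly assms by blast
  have "eventually_poly (Suc (d div 2)) (d - 2) (2 * c) (\<lambda>n. real (v n d))"
    using eventually_poly_scale[OF eventually_poly_shift[OF middle], of 2]
    by (rule eventually_poly_cong) (simp add: v_eq_count_middle)
  then obtain p where p: "degree p \<le> d - 2" "coeff p (d - 2) = 2 * c"
    and v: "\<forall>n\<ge>Suc (d div 2). real (v n d) = poly p (real n)"
    unfolding eventually_poly_def by auto
  have "coeff p (d - 2) \<noteq> 0"
    using p(2) \<open>c > 0\<close> by simp
  then have "p \<noteq> 0" "degree p = d - 2"
    using p(1) le_degree by (auto intro: le_antisym)
  moreover have "Suc (d div 2) \<le> n" if "int n \<ge> \<lceil>real d / 2\<rceil> + 1" for n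
  proof -
    have "int (d div 2) \<le> \<lceil>real d / 2\<rceil>"
      using of_nat_div_le_of_nat[of d 2] by (simp add: le_ceiling_iff)
    then show ?thesis
      using that by linarith
  qed
  ultimately show ?thesis
    using v by blast
qed

end
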